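(* Let $G$ be a periodic group and let $N$ be a normal subgroup of $G$. Assume that for every $x\in G$ the subgroup $[N,x]$ is a Chernikov group, and let $R_x$ denote its radicable part. Then the subgroup $R$ generated by all the subgroups $R_x$ ($x\in G$) is a radicable abelian normal subgroup of $G$.
   Context: For a subgroup $N$ and element $x$ of a group $G$, $[N,x]$ is the subgroup generated by all commutators $[a,x]=a^{-1}x^{-1}ax$ with $a\in N$. A group is radicable if every equation $x^r=a$ ($r$ a positive integer, $a$ in the group) has a solution in the group. A Chernikov group $H$ has a radicable abelian normal subgroup $R$ (its radicable part) which is a direct product of finitely many Prüfer groups $C_{p^\infty}$ and with $H/R$ finite. *)

theory Defs
  imports "HOL-Algebra.Algebra"
begin

(* The Pruefer p-group C_{p^\<infinity>}, modelled as the rationals in [0,1) whose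
   denominator is a power of p, under addition modulo 1. *)
definition prufer_group :: "nat \<Rightarrow> rat monoid" where
  "prufer_group p = \<lparr>carrier = {q. 0 \<le> q \<and> q < 1 \<and> (\<exists>n::nat. q * of_nat (p ^ n) \<in> \<int>)},
                     monoid.mult = (\<lambda>a b. a + b - of_int \<lfloor>a + b\<rfloor>),
                     one = 0\<rparr>"

definition commutator :: "('a, 'b) monoid_scheme \<Rightarrow> 'a \<Rightarrow> 'a \<Rightarrow> 'a" where
  "commutator G a x = inv\<^bsub>G\<^esub> a \<otimes>\<^bsub>G\<^esub> inv\<^bsub>G\<^esub> x \<otimes>\<^bsub>G\<^esub> a \<otimes>\<^bsub>G\<^esub> x"

definition comm_subgroup :: "('a, 'b) monoid_scheme \<Rightarrow> 'a set \<Rightarrow> 'a \<Rightarrow> 'a set" where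
  "comm_subgroup G N x = generate G {commutator G a x | a. a \<in> N}"

definition periodic_group :: "('a, 'b) monoid_scheme \<Rightarrow> bool" where
  "periodic_group G \<longleftrightarrow> (\<forall>x \<in> carrier G. \<exists>n::nat. n > 0 \<and> x [^]\<^bsub>G\<^esub> n = \<one>\<^bsub>G\<^esub>)"

definition radicable :: "('a, 'b) monoid_scheme \<Rightarrow> 'a set \<Rightarrow> bool" where
  "radicable G S \<longleftrightarrow> (\<forall>r::nat. r > 0 \<longrightarrow> (\<forall>a \<in> S. \<exists>y \<in> S. y [^]\<^bsub>G\<^esub> r = a))"

definition abelian_set :: "('a, 'b) monoid_scheme \<Rightarrow> 'a set \<Rightarrow> bool" where
  "abelian_set G S \<longleftrightarrow> (\<forall>a \<in> S. \<forall>b \<in> S. a \<otimes>\<^bsub>G\<^esub> b = b \<otimes>\<^bsub>G\<^esub> a)"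

definition chernikov :: "('a, 'b) monoid_scheme \<Rightarrow> 'a set \<Rightarrow> bool" where
  "chernikov G H \<longleftrightarrow> subgroup H G \<and>
     (\<exists>R. R \<lhd> G\<lparr>carrier := H\<rparr> \<and> radicable G R \<and> abelian_set G R \<and>
          (\<exists>(k::nat) (p::nat \<Rightarrow> nat). (\<forall>i<k. Factorial_Ring.prime (p i)) \<and>
              G\<lparr>carrier := R\<rparr> \<cong> product_group {..<k} (\<lambda>i. prufer_group (p i))) \<and>
          finite (carrier (G\<lparr>carrier := H\<rparr> Mod R)))"

(* radicable part of H: the largest radicable subgroup of H, i.e. the subgroup generated
   by all radicable subgroups of H (for a Chernikov group this is the R above) *)
definition radicable_part :: "('a, 'b) monoid_scheme \<Rightarrow> 'a set \<Rightarrow> 'a set" where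
  "radicable_part G H = generate G (\<Union>{S. subgroup S G \<and> S \<subseteq> H \<and> radicable G S})"

end

theory Submission
  imports Defs
begin

(* Any radicable subgroup of a Chernikov group H lies in each normal subgroup K of finite
   index m, since each of its elements is an m-th power and m-th powers lie in K; so the
   radicable part R_x of [N,x] is a radicable abelian subgroup. Conjugation by g maps [N,x]
   into [N,g x g^-1], and elements of N normalize every [N,x]; hence conjugation maps each
   R_x into some R_y, and, all of them lying in N, any two of them normalize each other.
   Two mutually normalizing abelian subgroups A, B with A radicable and B periodic commute
   elementwise: for b in B with b^k = 1 and a = d^k with d in A, the commutator e = [d,b]
   lies in A and in B, so it commutes with d and b; then e^k = [d,b^k] = 1 and
   b^-1 a b = (d e)^k = a. So R is generated by pairwise commuting elements, each having
   all its roots in R. *)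

abbreviation (in group) conjugate :: "'a \<Rightarrow> 'a \<Rightarrow> 'a"
  where "conjugate g h \<equiv> g \<otimes> h \<otimes> inv g"

context group
begin

section \<open>Conjugation and commutators\<close>

lemma inv_mult_cancel [simp]: "x \<in> carrier G \<Longrightarrow> y \<in> carrier G \<Longrightarrow> inv x \<otimes> (x \<otimes> y) = y"
  by (simp add: m_assoc[symmetric])

lemma mult_inv_cancel [simp]: "x \<in> carrier G \<Longrightarrow> y \<in> carrier G \<Longrightarrow> x \<otimes> (inv x \<otimes> y) = y"
  by (simp add: m_assoc[symmetric])

lemma conjugate_hom:
  assumes "g \<in> carrier G"
  shows "group_hom G G (conjugate g)"
proof -
  have "conjugate g \<in> hom G G"
    using assms by (intro homI) (simp_all add: m_assoc)
  then show ?thesis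
    by (simp add: group_hom_axioms_def group_hom_def is_group)
qed

lemma commutator_closed [simp]:
  "a \<in> carrier G \<Longrightarrow> x \<in> carrier G \<Longrightarrow> commutator G a x \<in> carrier G"
  unfolding commutator_def by simp

lemma conjugate_commutator:
  "a \<in> carrier G \<Longrightarrow> x \<in> carrier G \<Longrightarrow> g \<in> carrier G \<Longrightarrow>
    conjugate g (commutator G a x) = commutator G (conjugate g a) (conjugate g x)"
  unfolding commutator_def by (simp add: inv_mult_group m_assoc)

lemma commutator_mult_left:
  "a \<in> carrier G \<Longrightarrow> b \<in> carrier G \<Longrightarrow> x \<in> carrier G \<Longrightarrow>
    commutator G (a \<otimes> b) x = inv b \<otimes> commutator G a x \<otimes> b \<otimes> commutator G b x"
  unfolding commutator_def by (simp add: inv_mult_group m_assoc)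

lemma conjugate_eq_mult_commutator:
  "d \<in> carrier G \<Longrightarrow> b \<in> carrier G \<Longrightarrow> inv b \<otimes> d \<otimes> b = d \<otimes> commutator G d b"
  unfolding commutator_def by (simp add: m_assoc[symmetric])

lemma commutator_pow_right:
  assumes d: "d \<in> carrier G" and b: "b \<in> carrier G"
    and comm: "b \<otimes> commutator G d b = commutator G d b \<otimes> b"
  shows "commutator G d (b [^] n) = commutator G d b [^] (n::nat)"
proof -
  define e where "e = commutator G d b"
  have e: "e \<in> carrier G"
    unfolding e_def using d b by simp
  interpret c: group_hom G G "conjugate (inv b)"
    using conjugate_hom[OF inv_closed[OF b]] .
  have "inv (b [^] n) \<otimes> d \<otimes> b [^] n = d \<otimes> e [^] n"
  proof (induction n)
    case 0
    then show ?case using d by simp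
  next
    case (Suc n)
    have "inv (b [^] Suc n) \<otimes> d \<otimes> b [^] Suc n = inv b \<otimes> (inv (b [^] n) \<otimes> d \<otimes> b [^] n) \<otimes> b"
      using d b by (simp add: inv_mult_group m_assoc)
    also have "\<dots> = (inv b \<otimes> d \<otimes> b) \<otimes> (inv b \<otimes> e [^] n \<otimes> b)"
      unfolding Suc using c.hom_mult[of d "e [^] n"] d b e by simp
    also have "\<dots> = (d \<otimes> e) \<otimes> e [^] n"
    proof -
      have "e [^] n \<otimes> b = b \<otimes> e [^] n"
        using group_commutes_pow[OF comm[folded e_def, symmetric] e b] .
      then have "inv b \<otimes> e [^] n \<otimes> b = e [^] n"
        using b e by (simp add: m_assoc inv_solve_left')
      then show ?thesis
        using conjugate_eq_mult_commutator[OF d b] by (simp add: e_def)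
    qed
    finally show ?case
      using d e by (simp add: m_assoc del: nat_pow_Suc flip: nat_pow_Suc2)
  qed
  then show ?thesis
    using conjugate_eq_mult_commutator[OF d nat_pow_closed[OF b]] d b e
    by (simp add: e_def)
qed

end

section \<open>Subgroups generated by commuting elements\<close>

definition centralizer :: "('a, 'b) monoid_scheme \<Rightarrow> 'a set \<Rightarrow> 'a set"
  where "centralizer G S = {h \<in> carrier G. \<forall>s \<in> S. s \<otimes>\<^bsub>G\<^esub> h = h \<otimes>\<^bsub>G\<^esub> s}"

context group
begin

lemma subgroup_centralizer:
  assumes "S \<subseteq> carrier G"
  shows "subgroup (centralizer G S) G"
proof (rule subgroupI)
  show "centralizer G S \<subseteq> carrier G"
    unfolding centralizer_def by blast
  have "\<one> \<in> centralizer G S"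
    using assms unfolding centralizer_def by auto
  then show "centralizer G S \<noteq> {}"
    by blast
next
  fix h assume "h \<in> centralizer G S"
  then have h: "h \<in> carrier G" and comm: "\<And>s. s \<in> S \<Longrightarrow> s \<otimes> h = h \<otimes> s"
    unfolding centralizer_def by auto
  have "s \<otimes> inv h = inv h \<otimes> s" if s: "s \<in> S" for s
  proof -
    have s_carr: "s \<in> carrier G" using s assms by blast
    have "s \<otimes> inv h = inv h \<otimes> (h \<otimes> s) \<otimes> inv h"
      using h s_carr by (simp add: m_assoc[symmetric])
    also have "\<dots> = inv h \<otimes> (s \<otimes> h) \<otimes> inv h"
      using comm[OF s] by simp
    also have "\<dots> = inv h \<otimes> s"
      using h s_carr by (simp add: m_assoc)
    finally show ?thesis .
  qed
  then show "inv h \<in> centralizer G S"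
    using h unfolding centralizer_def by auto
next
  fix h k assume "h \<in> centralizer G S" "k \<in> centralizer G S"
  then have hk: "h \<in> carrier G" "k \<in> carrier G"
    and comm: "\<And>s. s \<in> S \<Longrightarrow> s \<otimes> h = h \<otimes> s" "\<And>s. s \<in> S \<Longrightarrow> s \<otimes> k = k \<otimes> s"
    unfolding centralizer_def by auto
  have "s \<otimes> (h \<otimes> k) = h \<otimes> k \<otimes> s" if s: "s \<in> S" for s
  proof -
    have s_carr: "s \<in> carrier G" using s assms by blast
    have "s \<otimes> (h \<otimes> k) = h \<otimes> s \<otimes> k"
      using comm(1)[OF s] hk s_carr by (simp add: m_assoc[symmetric])
    also have "\<dots> = h \<otimes> k \<otimes> s"
      using comm(2)[OF s] hk s_carr by (simp add: m_assoc)
    finally show ?thesis .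
  qed
  then show "h \<otimes> k \<in> centralizer G S"
    using hk unfolding centralizer_def by auto
qed

lemma abelian_set_generate:
  assumes U: "U \<subseteq> carrier G" and comm: "\<And>u v. u \<in> U \<Longrightarrow> v \<in> U \<Longrightarrow> u \<otimes> v = v \<otimes> u"
  shows "abelian_set G (generate G U)"
proof -
  have "U \<subseteq> centralizer G U"
    using U comm unfolding centralizer_def by auto
  then have "generate G U \<subseteq> centralizer G U"
    by (rule generate_subgroup_incl[OF _ subgroup_centralizer[OF U]])
  then have "U \<subseteq> centralizer G (generate G U)"
    using U unfolding centralizer_def by auto
  then have "generate G U \<subseteq> centralizer G (generate G U)"
    by (rule generate_subgroup_incl[OF _ subgroup_centralizer[OF generate_incl[OF U]]])
  then show ?thesis
    unfolding abelian_set_def centralizer_def by blast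
qed

lemma radicable_generate:
  assumes U: "U \<subseteq> carrier G" and ab: "abelian_set G (generate G U)"
    and roots: "\<And>u (r::nat). u \<in> U \<Longrightarrow> r > 0 \<Longrightarrow> \<exists>y \<in> generate G U. y [^] r = u"
  shows "radicable G (generate G U)"
  unfolding radicable_def
proof (intro allI impI ballI)
  fix r :: nat and a assume r: "r > 0" and "a \<in> generate G U"
  from this(2) show "\<exists>y \<in> generate G U. y [^] r = a"
  proof (induction rule: generate.induct)
    case one
    show ?case by (rule bexI[of _ \<one>]) (simp_all add: generate.one)
  next
    case (incl u)
    then show ?case using roots r by blast
  next
    case (inv u)
    then obtain y where y: "y \<in> generate G U" "y [^] r = u" using roots r by blast
    then have "inv y [^] r = inv u"
      using generate_in_carrier[OF U] nat_pow_inv by metis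
    then show ?case using generate_m_inv_closed[OF U y(1)] by blast
  next
    case (eng u v)
    then obtain y z where y: "y \<in> generate G U" "y [^] r = u" and z: "z \<in> generate G U" "z [^] r = v"
      by blast
    have "(y \<otimes> z) [^] r = u \<otimes> v"
      using ab y z generate_in_carrier[OF U] pow_mult_distrib unfolding abelian_set_def by metis
    then show ?case using generate.eng[OF y(1) z(1)] by blast
  qed
qed

lemma abelian_radicable_generate_UN:
  assumes sub: "\<And>i. i \<in> I \<Longrightarrow> subgroup (P i) G"
    and rad: "\<And>i. i \<in> I \<Longrightarrow> radicable G (P i)"
    and comm: "\<And>i j u v. i \<in> I \<Longrightarrow> j \<in> I \<Longrightarrow> u \<in> P i \<Longrightarrow> v \<in> P j \<Longrightarrow> u \<otimes> v = v \<otimes> u"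
  shows "abelian_set G (generate G (\<Union>i \<in> I. P i)) \<and> radicable G (generate G (\<Union>i \<in> I. P i))"
proof
  have U: "(\<Union>i \<in> I. P i) \<subseteq> carrier G"
    by (intro UN_least subgroup.subset sub)
  show ab: "abelian_set G (generate G (\<Union>i \<in> I. P i))"
    using comm by (intro abelian_set_generate[OF U]) auto
  show "radicable G (generate G (\<Union>i \<in> I. P i))"
  proof (rule radicable_generate[OF U ab])
    fix u and r :: nat assume u: "u \<in> (\<Union>i \<in> I. P i)" and r: "r > 0"
    obtain i where i: "i \<in> I" "u \<in> P i"
      using u by (rule UN_E)
    then obtain z where z: "z \<in> P i" "z [^] r = u"
      using rad r unfolding radicable_def by blast
    have "z \<in> generate G (\<Union>i \<in> I. P i)"
      using i(1) z(1) by (auto intro: generate.incl)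
    then show "\<exists>z \<in> generate G (\<Union>i \<in> I. P i). z [^] r = u"
      using z(2) by blast
  qed
qed

lemma normal_generate_UN:
  assumes sub: "\<And>i. i \<in> I \<Longrightarrow> P i \<subseteq> carrier G"
    and conj: "\<And>g i. g \<in> carrier G \<Longrightarrow> i \<in> I \<Longrightarrow> \<exists>j \<in> I. conjugate g ` P i \<subseteq> P j"
  shows "generate G (\<Union>i \<in> I. P i) \<lhd> G"
proof (rule normal_generateI)
  show "(\<Union>i \<in> I. P i) \<subseteq> carrier G"
    by (intro UN_least sub)
next
  fix u g assume u: "u \<in> (\<Union>i \<in> I. P i)" and g: "g \<in> carrier G"
  obtain i where i: "i \<in> I" "u \<in> P i"
    using u by (rule UN_E)
  then obtain j where "j \<in> I" "conjugate g ` P i \<subseteq> P j"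
    using conj[OF g] by blast
  then show "conjugate g u \<in> (\<Union>i \<in> I. P i)"
    using i(2) by blast
qed

end

section \<open>Radicable subgroups\<close>

lemma (in group_hom) radicable_image:
  assumes "S \<subseteq> carrier G" "radicable G S"
  shows "radicable H (h ` S)"
  unfolding radicable_def
proof (intro allI impI ballI)
  fix r :: nat and a assume "r > 0" "a \<in> h ` S"
  then obtain s y where "s \<in> S" "a = h s" "y \<in> S" "y [^] r = s"
    using assms(2) unfolding radicable_def by blast
  then have "h y \<in> h ` S" "h y [^]\<^bsub>H\<^esub> r = a"
    using assms(1) hom_nat_pow[of y r] by auto
  then show "\<exists>z \<in> h ` S. z [^]\<^bsub>H\<^esub> r = a"
    by blast
qed

(* Holds also for infinite G Mod H, whose order is 0. *)
lemma (in normal) pow_order_FactGroup_mem: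
  assumes a: "a \<in> carrier G"
  shows "a [^] order (G Mod H) \<in> H"
proof -
  have "H #> a [^] order (G Mod H) = (H #> a) [^]\<^bsub>G Mod H\<^esub> order (G Mod H)"
    using FactGroup_pow[OF a] by simp
  also have "\<dots> = \<one>\<^bsub>G Mod H\<^esub>"
    using a by (intro group.pow_order_eq_1 factorgroup_is_group) (simp add: carrier_FactGroup)
  finally have "H #> a [^] order (G Mod H) = H"
    by simp
  then show ?thesis
    using rcos_self[OF nat_pow_closed[OF a, of "order (G Mod H)"] is_subgroup] by simp
qed

lemma (in normal) radicable_subset_of_finite_index:
  assumes fin: "finite (carrier (G Mod H))" and S: "S \<subseteq> carrier G" "radicable G S"
  shows "S \<subseteq> H"
proof
  fix s assume "s \<in> S"
  moreover have "order (G Mod H) > 0"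
    using fin monoid.order_gt_0_iff_finite[OF group.is_monoid[OF factorgroup_is_group]] by simp
  ultimately obtain t where t: "t \<in> S" "t [^] order (G Mod H) = s"
    using S(2) unfolding radicable_def by blast
  then have "t [^] order (G Mod H) \<in> H"
    using S(1) by (intro pow_order_FactGroup_mem) blast
  then show "s \<in> H"
    unfolding t(2) .
qed

context group
begin

lemma radicable_subgroup_subset_radicable_part:
  "subgroup S G \<Longrightarrow> S \<subseteq> H \<Longrightarrow> radicable G S \<Longrightarrow> S \<subseteq> radicable_part G H"
  unfolding radicable_part_def by (blast intro: generate.incl)

lemma conjugate_radicable_part:
  assumes g: "g \<in> carrier G" and H: "conjugate g ` H \<subseteq> H'"
  shows "conjugate g ` radicable_part G H \<subseteq> radicable_part G H'"
proof -
  interpret c: group_hom G G "conjugate g"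
    using conjugate_hom[OF g] .
  define K where "K T = \<Union>{S. subgroup S G \<and> S \<subseteq> T \<and> radicable G S}" for T
  have "conjugate g ` K H \<subseteq> K H'"
  proof
    fix y assume "y \<in> conjugate g ` K H"
    then obtain S where S: "subgroup S G" "S \<subseteq> H" "radicable G S" and y: "y \<in> conjugate g ` S"
      unfolding K_def by blast
    have "subgroup (conjugate g ` S) G" "radicable G (conjugate g ` S)" "conjugate g ` S \<subseteq> H'"
      using c.subgroup_img_is_subgroup c.radicable_image subgroup.subset S H by blast+
    then show "y \<in> K H'"
      unfolding K_def using y by blast
  qed
  moreover have "K H \<subseteq> carrier G"
    unfolding K_def using subgroup.subset by blast
  ultimately show ?thesis
    unfolding radicable_part_def K_def[symmetric] using c.generate_img mono_generate by metis
qed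

lemma chernikov_radicable_part:
  assumes "chernikov G H"
  shows "subgroup (radicable_part G H) G" and "radicable_part G H \<subseteq> H"
    and "radicable G (radicable_part G H)" and "abelian_set G (radicable_part G H)"
proof -
  from assms obtain R where H: "subgroup H G" and R: "R \<lhd> G\<lparr>carrier := H\<rparr>"
    and R_rad: "radicable G R" and R_ab: "abelian_set G R"
    and fin: "finite (carrier (G\<lparr>carrier := H\<rparr> Mod R))"
    unfolding chernikov_def by blast
  interpret K: normal R "G\<lparr>carrier := H\<rparr>"
    by (rule R)
  have "R \<subseteq> H"
    using K.subset by simp
  have R_sub: "subgroup R G"
    using incl_subgroup[OF H K.is_subgroup] .
  have "radicable_part G H \<subseteq> R"
    unfolding radicable_part_def
  proof (rule generate_subgroup_incl[OF Union_least R_sub])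
    fix S assume "S \<in> {S. subgroup S G \<and> S \<subseteq> H \<and> radicable G S}"
    then have "S \<subseteq> carrier (G\<lparr>carrier := H\<rparr>)" "radicable (G\<lparr>carrier := H\<rparr>) S"
      unfolding radicable_def by (auto simp flip: nat_pow_consistent)
    then show "S \<subseteq> R"
      by (rule K.radicable_subset_of_finite_index[OF fin])
  qed
  moreover have "R \<subseteq> radicable_part G H"
    using radicable_subgroup_subset_radicable_part R_sub \<open>R \<subseteq> H\<close> R_rad .
  ultimately have "radicable_part G H = R" ..
  then show "subgroup (radicable_part G H) G" "radicable_part G H \<subseteq> H"
    "radicable G (radicable_part G H)" "abelian_set G (radicable_part G H)"
    using R_sub \<open>R \<subseteq> H\<close> R_rad R_ab by simp_all
qed

lemma radicable_commutes_with_torsion: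
  assumes A: "subgroup A G" "abelian_set G A" "radicable G A"
    and B: "subgroup B G" "abelian_set G B"
    and B_normalizes_A: "\<And>b. b \<in> B \<Longrightarrow> conjugate b ` A \<subseteq> A"
    and A_normalizes_B: "\<And>a. a \<in> A \<Longrightarrow> conjugate a ` B \<subseteq> B"
    and a: "a \<in> A" and b: "b \<in> B" "b [^] k = \<one>" "k > (0::nat)"
  shows "a \<otimes> b = b \<otimes> a"
proof -
  obtain d where d: "d \<in> A" "d [^] k = a"
    using A(3) a b(3) unfolding radicable_def by blast
  have carrier: "a \<in> carrier G" "b \<in> carrier G" "d \<in> carrier G"
    using subgroup.mem_carrier[OF A(1) a] subgroup.mem_carrier[OF B(1) b(1)]
      subgroup.mem_carrier[OF A(1) d(1)] .
  define e where "e = commutator G d b"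
  have e: "e \<in> carrier G"
    unfolding e_def using carrier by simp
  have "conjugate (inv b) d \<in> A"
    using B_normalizes_A[OF subgroup.m_inv_closed[OF B(1) b(1)]] d(1) by blast
  moreover have "e = inv d \<otimes> conjugate (inv b) d"
    unfolding e_def commutator_def using carrier by (simp add: m_assoc)
  ultimately have eA: "e \<in> A"
    using A(1) d(1) by (simp add: subgroup.m_closed subgroup.m_inv_closed)
  have "conjugate (inv d) (inv b) \<in> B"
    using A_normalizes_B[OF subgroup.m_inv_closed[OF A(1) d(1)]]
      subgroup.m_inv_closed[OF B(1) b(1)] by blast
  moreover have "e = conjugate (inv d) (inv b) \<otimes> b"
    unfolding e_def commutator_def using carrier by simp
  ultimately have eB: "e \<in> B"
    using subgroup.m_closed[OF B(1) _ b(1)] by simp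
  have "d \<otimes> e = e \<otimes> d" "b \<otimes> e = e \<otimes> b"
    using A(2) B(2) d(1) eA b(1) eB unfolding abelian_set_def by blast+
  have ek: "e [^] k = \<one>"
    using commutator_pow_right[OF carrier(3,2), of k] \<open>b \<otimes> e = e \<otimes> b\<close> b(2) carrier
    unfolding e_def by (simp add: commutator_def)
  interpret c: group_hom G G "conjugate (inv b)"
    using conjugate_hom[OF inv_closed[OF carrier(2)]] .
  have "inv b \<otimes> a \<otimes> b = (inv b \<otimes> d \<otimes> b) [^] k"
    using c.hom_nat_pow[of d k] d(2) carrier by simp
  also have "\<dots> = a"
    unfolding e_def[symmetric] conjugate_eq_mult_commutator[OF carrier(3,2)]
    using pow_mult_distrib[OF \<open>d \<otimes> e = e \<otimes> d\<close> carrier(3) e] ek d(2) carrier by simp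
  finally show ?thesis
    using carrier by (simp add: m_assoc inv_solve_left')
qed

section \<open>The subgroups [N,x]\<close>

lemma comm_subgroup_subset:
  assumes N: "N \<lhd> G" and x: "x \<in> carrier G"
  shows "comm_subgroup G N x \<subseteq> N"
  unfolding comm_subgroup_def
proof (rule generate_subgroup_incl)
  show "subgroup N G"
    using normal_imp_subgroup[OF N] .
  show "{commutator G a x |a. a \<in> N} \<subseteq> N"
  proof clarify
    fix a assume a: "a \<in> N"
    have "commutator G a x = inv a \<otimes> (inv x \<otimes> a \<otimes> x)"
      unfolding commutator_def using subgroup.mem_carrier[OF \<open>subgroup N G\<close> a] x by (simp add: m_assoc)
    then show "commutator G a x \<in> N"
      using normal.inv_op_closed1[OF N x a] a \<open>subgroup N G\<close>
      by (simp add: subgroup.m_closed subgroup.m_inv_closed)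
  qed
qed

lemma conjugate_comm_subgroup:
  assumes N: "N \<lhd> G" and g: "g \<in> carrier G" and x: "x \<in> carrier G"
  shows "conjugate g ` comm_subgroup G N x \<subseteq> comm_subgroup G N (conjugate g x)"
proof -
  define C where "C y = {commutator G a y |a. a \<in> N}" for y
  have N_carr: "N \<subseteq> carrier G"
    using subgroup.subset[OF normal_imp_subgroup[OF N]] .
  have C_carr: "C x \<subseteq> carrier G"
    unfolding C_def using N_carr x by auto
  interpret c: group_hom G G "conjugate g"
    using conjugate_hom[OF g] .
  have "conjugate g ` C x \<subseteq> C (conjugate g x)"
  proof
    fix c assume "c \<in> conjugate g ` C x"
    then obtain a where a: "a \<in> N" and c: "c = conjugate g (commutator G a x)"
      unfolding C_def by blast
    have "c = commutator G (conjugate g a) (conjugate g x)"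
      unfolding c using conjugate_commutator a N_carr x g by blast
    then show "c \<in> C (conjugate g x)"
      unfolding C_def using normal.inv_op_closed2[OF N g a] by blast
  qed
  then show ?thesis
    unfolding comm_subgroup_def C_def[symmetric] c.generate_img[OF C_carr, symmetric]
    by (rule mono_generate)
qed

lemma conjugate_comm_subgroup_self:
  assumes N: "subgroup N G" and g: "g \<in> N" and x: "x \<in> carrier G"
  shows "conjugate g ` comm_subgroup G N x \<subseteq> comm_subgroup G N x"
proof -
  define C where "C = {commutator G a x |a. a \<in> N}"
  have C_carr: "C \<subseteq> carrier G"
    unfolding C_def using subgroup.subset[OF N] x by auto
  have g_carr: "g \<in> carrier G"
    using subgroup.mem_carrier[OF N g] .
  interpret c: group_hom G G "conjugate g"
    using conjugate_hom[OF g_carr] .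
  have "conjugate g ` C \<subseteq> generate G C"
  proof
    fix c assume "c \<in> conjugate g ` C"
    then obtain a where a: "a \<in> N" and c: "c = conjugate g (commutator G a x)"
      unfolding C_def by blast
    have a_carr: "a \<in> carrier G"
      using subgroup.mem_carrier[OF N a] .
    have "conjugate g (commutator G a x) = commutator G (a \<otimes> inv g) x \<otimes> inv (commutator G (inv g) x)"
      using commutator_mult_left[of a "inv g" x] a_carr g_carr x by (simp add: inv_solve_right)
    moreover have "commutator G (a \<otimes> inv g) x \<in> C" "commutator G (inv g) x \<in> C"
      unfolding C_def using N a g by (auto intro: subgroup.m_closed subgroup.m_inv_closed)
    ultimately show "c \<in> generate G C"
      unfolding c by (simp add: generate.eng generate.incl generate.inv)
  qed
  then show ?thesis
    unfolding comm_subgroup_def C_def[symmetric] c.generate_img[OF C_carr, symmetric]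
    by (rule generate_subgroup_incl[OF _ generate_is_subgroup[OF C_carr]])
qed

lemma conjugate_radicable_part_comm_subgroup:
  assumes "N \<lhd> G" "g \<in> carrier G" "x \<in> carrier G"
  shows "conjugate g ` radicable_part G (comm_subgroup G N x)
    \<subseteq> radicable_part G (comm_subgroup G N (conjugate g x))"
  using conjugate_radicable_part[OF assms(2) conjugate_comm_subgroup[OF assms]] .

lemma conjugate_radicable_part_comm_subgroup_self:
  assumes "subgroup N G" "g \<in> N" "x \<in> carrier G"
  shows "conjugate g ` radicable_part G (comm_subgroup G N x) \<subseteq> radicable_part G (comm_subgroup G N x)"
  using conjugate_radicable_part[OF subgroup.mem_carrier[OF assms(1,2)]
      conjugate_comm_subgroup_self[OF assms]] .

lemma radicable_parts_commute:
  assumes periodic: "periodic_group G" and N: "N \<lhd> G"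
    and chernikov: "\<And>x. x \<in> carrier G \<Longrightarrow> chernikov G (comm_subgroup G N x)"
    and x: "x \<in> carrier G" and y: "y \<in> carrier G"
    and u: "u \<in> radicable_part G (comm_subgroup G N x)"
    and v: "v \<in> radicable_part G (comm_subgroup G N y)"
  shows "u \<otimes> v = v \<otimes> u"
proof -
  define R where "R z = radicable_part G (comm_subgroup G N z)" for z
  have R_N: "R z \<subseteq> N" if "z \<in> carrier G" for z
    unfolding R_def using chernikov_radicable_part(2)[OF chernikov[OF that]]
      comm_subgroup_subset[OF N that] by (rule subset_trans)
  have normalizes: "conjugate g ` R z \<subseteq> R z" if "g \<in> R w" "z \<in> carrier G" "w \<in> carrier G" for g z w
    unfolding R_def using conjugate_radicable_part_comm_subgroup_self[OF normal_imp_subgroup[OF N]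
      subsetD[OF R_N[OF that(3)] that(1)] that(2)] .
  note R = chernikov_radicable_part(1,4,3)[OF chernikov, folded R_def]
  obtain k :: nat where k: "v [^] k = \<one>" "k > 0"
    using periodic subgroup.mem_carrier[OF R(1)[OF y] v[folded R_def]]
    unfolding periodic_group_def by blast
  show ?thesis
  proof (rule radicable_commutes_with_torsion[OF R[OF x] R(1,2)[OF y] _ _ u[folded R_def] v[folded R_def] k])
    show "conjugate b ` R x \<subseteq> R x" if "b \<in> R y" for b
      using normalizes[OF that x y] .
    show "conjugate a ` R y \<subseteq> R y" if "a \<in> R x" for a
      using normalizes[OF that y x] .
  qed
qed

end

theorem lemma2p4:
  fixes G (structure) and N :: "'a set"
  assumes "group G"
    and "periodic_group G"
    and "N \<lhd> G"
    and "\<And>x. x \<in> carrier G \<Longrightarrow> chernikov G (comm_subgroup G N x)"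
  shows "generate G (\<Union>x \<in> carrier G. radicable_part G (comm_subgroup G N x)) \<lhd> G
       \<and> abelian_set G (generate G (\<Union>x \<in> carrier G. radicable_part G (comm_subgroup G N x)))
       \<and> radicable G (generate G (\<Union>x \<in> carrier G. radicable_part G (comm_subgroup G N x)))"
proof -
  interpret group G by (rule assms(1))
  define P where "P x = radicable_part G (comm_subgroup G N x)" for x
  note P = chernikov_radicable_part(1,3)[OF assms(4), folded P_def]
  have "abelian_set G (generate G (\<Union>x \<in> carrier G. P x)) \<and> radicable G (generate G (\<Union>x \<in> carrier G. P x))"
    using P radicable_parts_commute[OF assms(2-4), folded P_def] by (rule abelian_radicable_generate_UN)
  moreover have "generate G (\<Union>x \<in> carrier G. P x) \<lhd> G"
  proof (rule normal_generate_UN)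
    show "P x \<subseteq> carrier G" if "x \<in> carrier G" for x
      using subgroup.subset[OF P(1)[OF that]] .
    show "\<exists>y \<in> carrier G. conjugate g ` P x \<subseteq> P y" if "g \<in> carrier G" "x \<in> carrier G" for g x
      using conjugate_radicable_part_comm_subgroup[OF assms(3) that, folded P_def] that
      by (intro bexI[where x = "conjugate g x"]) simp_all
  qed
  ultimately show ?thesis
    unfolding P_def by blast
qed

end
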